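(* Let $\varphi(s,v)=\vec c(s)+v\vec q(s)$ be a developable timelike ruled surface of type $M^1_+$ in $\mathbb{R}^3_1$ and let the spacelike ruled surface $\varphi^*(s,v)=\vec c(s)+R\vec a(s)+v\vec q^*(s)$ of type $M^2_+$ be a Mannheim offset of $\varphi$, with $\theta$ the angle between $\vec q$ and $\vec q^*$. Let $\varphi_{h^*}$ and $\varphi_{a^*}$ be the trajectory ruled surfaces generated by $\vec h^*$ and $\vec a^*$. Then (a) $\varphi_{h^*}$ is nondevelopable; (b) $\varphi_{a^*}$ is developable if and only if $\cos\theta+R\frac{ds_1}{ds}\kappa\sin\theta=0$.
   Context: Work in Minkowski 3-space $\mathbb{R}^3_1$ with $\langle x,y\rangle=-x_1y_1+x_2y_2+x_3y_3$, $\|x\|=\sqrt{|\langle x,x\rangle|}$, and Lorentzian cross product $x\times y=(x_2y_3-x_3y_2,\,x_1y_3-x_3y_1,\,x_2y_1-x_1y_2)$. A ruled surface is $\varphi(s,v)=\vec c(s)+v\vec q(s)$ with $\vec q$ a unit non-null vector field, $d\vec q/ds$ non-null, $\vec c$ the striction curve ($\langle d\vec q/ds,d\vec c/ds\rangle=0$) and $s$ the arc length of $\vec c$. Its Frenet frame $\{\vec q,\vec h,\vec a\}$ has central normal $\vec h=\frac{d\vec q/ds}{\|d\vec q/ds\|}$ and asymptotic normal $\vec a=\frac{(d\vec q/ds)\times\vec q}{\|d\vec q/ds\|}$. Type $M^1_+$: $\vec q$ and $\vec h$ spacelike (a timelike surface); type $M^2_+$: $\vec h$ timelike, $\vec q$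 and $d\vec q/ds$ spacelike (a spacelike surface). Let $s_1$ be the arc length of the spherical image of $\vec q$ and $\kappa$ the conical curvature of the directing cone; for type $M^1_+$: $d\vec q/ds_1=\vec h$, $d\vec h/ds_1=-\vec q+\kappa\vec a$, $d\vec a/ds_1=\kappa\vec h$. A ruled surface $\psi(s,v)=\vec b(s)+v\vec e(s)$ has distribution parameter $\det(d\vec b/ds,\vec e,d\vec e/ds)/\langle d\vec e/ds,d\vec e/ds\rangle$ and is developable iff it vanishes identically. A ruled surface $\varphi^*(s,v)=\vec c^*(s)+v\vec q^*(s)$ with Frenet frame $\{\vec q^*,\vec h^*,\vec a^*\}$ is a Mannheim offset of $\varphi$ if its rulings correspond one-to-one with those of $\varphi$ and $\vec h^*=\vec a$; then $\vec c^*=\vec c+R\vec a$ with $R$ constant since $\varphi$ is developable, and with $\theta$ the angle between $\vec q$ and $\vec q^*$, $\vec q^*=\cos\theta\,\vec q+\sin\theta\,\vec h$, $\vec a^*=\sin\theta\,\vec q-\cos\theta\,\vec h$. The trajectory ruled surfaces are $\varphi_{h^*}(s,v)=\vec c^*(s)+v\vec h^*(s)$ and $\varphi_{a^*}(s,v)=\vec c^*(s)+v\vec a^*(s)$. *)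

theory Defs
  imports "HOL-Analysis.Analysis"
begin

definition lor_inner :: "real^3 \<Rightarrow> real^3 \<Rightarrow> real" where
  "lor_inner x y = - x$1 * y$1 + x$2 * y$2 + x$3 * y$3"

definition lnorm :: "real^3 \<Rightarrow> real" where
  "lnorm x = sqrt \<bar>lor_inner x x\<bar>"

definition lcross :: "real^3 \<Rightarrow> real^3 \<Rightarrow> real^3" where
  "lcross x y = vector [x$2 * y$3 - x$3 * y$2, x$1 * y$3 - x$3 * y$1, x$2 * y$1 - x$1 * y$2]"

definition spacelike :: "real^3 \<Rightarrow> bool" where
  "spacelike x \<longleftrightarrow> lor_inner x x > 0"

definition timelike :: "real^3 \<Rightarrow> bool" where
  "timelike x \<longleftrightarrow> lor_inner x x < 0"

definition det3 :: "real^3 \<Rightarrow> real^3 \<Rightarrow> real^3 \<Rightarrow> real" where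
  "det3 x y z = det (vector [x, y, z] :: real^3^3)"

definition central_normal :: "(real \<Rightarrow> real^3) \<Rightarrow> real \<Rightarrow> real^3" where
  "central_normal q s = (1 / lnorm (vector_derivative q (at s))) *\<^sub>R vector_derivative q (at s)"

definition asymptotic_normal :: "(real \<Rightarrow> real^3) \<Rightarrow> real \<Rightarrow> real^3" where
  "asymptotic_normal q s =
     (1 / lnorm (vector_derivative q (at s))) *\<^sub>R lcross (vector_derivative q (at s)) (q s)"

text \<open>Distribution parameter of the ruled surface b(s) + v e(s).\<close>
definition distribution_parameter :: "(real \<Rightarrow> real^3) \<Rightarrow> (real \<Rightarrow> real^3) \<Rightarrow> real \<Rightarrow> real" where
  "distribution_parameter b e s =
     det3 (vector_derivative b (at s)) (e s) (vector_derivative e (at s))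
     / lor_inner (vector_derivative e (at s)) (vector_derivative e (at s))"

definition developable :: "(real \<Rightarrow> real^3) \<Rightarrow> (real \<Rightarrow> real^3) \<Rightarrow> real set \<Rightarrow> bool" where
  "developable b e I \<longleftrightarrow> (\<forall>s\<in>I. distribution_parameter b e s = 0)"

end

theory Submission
  imports Defs
begin

text \<open>Developability together with the striction condition forces the striction curve to be
tangent to the ruling, c' = q, and the Frenet formula a' = k h with k = \<kappa> ds1/ds then gives
(c*)' = q + R k h.  Since h* = a, the director of the surface generated by h* has derivative k h,
while a* = a \<times> q* = cos \<theta> h - sin \<theta> q has derivative k cos \<theta> a.  Evaluating the
determinants in the frame {q, h, a} gives the distribution parameters 1/k and
(cos \<theta> + R k sin \<theta>)/(k cos \<theta>), and non-nullity of (a*)' guarantees k cos \<theta> \<noteq> 0.\<close>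

lemma lcross_nth:
  "lcross x y $ 1 = x$2 * y$3 - x$3 * y$2"
  "lcross x y $ 2 = x$1 * y$3 - x$3 * y$1"
  "lcross x y $ 3 = x$2 * y$1 - x$1 * y$2"
  by (simp_all add: lcross_def vector_def)

lemma det3_expand:
  "det3 x y z = x$1*y$2*z$3 - x$1*y$3*z$2 - x$2*y$1*z$3 + x$2*y$3*z$1 + x$3*y$1*z$2 - x$3*y$2*z$1"
  unfolding det3_def det_3 by (simp add: vector_def algebra_simps)

lemma vec3_eq_iff: "(x::real^3) = y \<longleftrightarrow> x$1 = y$1 \<and> x$2 = y$2 \<and> x$3 = y$3"
  by (simp add: vec_eq_iff forall_3)

lemma lor_inner_commute: "lor_inner x y = lor_inner y x"
  by (simp add: lor_inner_def algebra_simps)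

lemma lor_inner_scaleR [simp]:
  "lor_inner (r *\<^sub>R x) y = r * lor_inner x y"
  "lor_inner x (r *\<^sub>R y) = r * lor_inner x y"
  by (simp_all add: lor_inner_def algebra_simps)

lemma lcross_scaleR [simp]:
  "lcross (r *\<^sub>R x) y = r *\<^sub>R lcross x y"
  "lcross x (r *\<^sub>R y) = r *\<^sub>R lcross x y"
  by (simp_all add: vec3_eq_iff lcross_nth algebra_simps)

lemma lor_inner_add [simp]:
  "lor_inner (x + y) z = lor_inner x z + lor_inner y z"
  "lor_inner x (y + z) = lor_inner x y + lor_inner x z"
  by (simp_all add: lor_inner_def algebra_simps)

lemma lcross_add [simp]:
  "lcross (x + y) z = lcross x z + lcross y z"
  "lcross x (y + z) = lcross x y + lcross x z"
  by (simp_all add: vec3_eq_iff lcross_nth algebra_simps)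

lemma lcross_self [simp]: "lcross x x = 0"
  by (simp add: vec3_eq_iff lcross_nth)

lemma lnorm_scaleR: "lnorm (r *\<^sub>R x) = \<bar>r\<bar> * lnorm x"
  by (simp add: lnorm_def abs_mult real_sqrt_mult power2_eq_square[symmetric])

lemma det3_scaleR_right: "det3 x y (r *\<^sub>R z) = r * det3 x y z"
  by (simp add: det3_expand algebra_simps)

lemma det3_swap23: "det3 x y z = - det3 x z y"
  by (simp add: det3_expand)

lemma lor_inner_lcross_self:
  "lor_inner (lcross x y) (lcross x y) = (lor_inner x y)\<^sup>2 - lor_inner x x * lor_inner y y"
  by (simp add: lcross_nth lor_inner_def power2_eq_square algebra_simps)

lemma lcross_lcross: "lcross (lcross u v) w = lor_inner v w *\<^sub>R u - lor_inner u w *\<^sub>R v"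
  by (simp add: vec3_eq_iff lcross_nth lor_inner_def algebra_simps)

lemma bounded_bilinear_lor_inner: "bounded_bilinear lor_inner"
  unfolding bilinear_conv_bounded_bilinear[symmetric] bilinear_def
  by (auto intro!: linearI simp: lor_inner_def algebra_simps)

lemma bounded_bilinear_lcross: "bounded_bilinear lcross"
  unfolding bilinear_conv_bounded_bilinear[symmetric] bilinear_def
  by (auto intro!: linearI simp: vec3_eq_iff lcross_nth algebra_simps)

lemmas has_vector_derivative_lor_inner =
  bounded_bilinear.has_vector_derivative[OF bounded_bilinear_lor_inner]

lemmas has_vector_derivative_lcross =
  bounded_bilinear.has_vector_derivative[OF bounded_bilinear_lcross]

lemma lor_inner_derivative_eq_0_if_constant:
  assumes "open I" "s \<in> I" "\<forall>t\<in>I. lor_inner (f t) (f t) = r"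
    and "(f has_vector_derivative f') (at s)"
  shows "lor_inner (f s) f' = 0"
proof -
  have "((\<lambda>t. lor_inner (f t) (f t)) has_vector_derivative
          lor_inner (f s) f' + lor_inner f' (f s)) (at s)"
    using has_vector_derivative_lor_inner[OF assms(4) assms(4)] .
  moreover have "((\<lambda>t. lor_inner (f t) (f t)) has_vector_derivative 0) (at s)"
    by (rule has_vector_derivative_transform_within_open[OF has_vector_derivative_const assms(1,2)])
      (use assms(3) in simp)
  ultimately have "lor_inner (f s) f' + lor_inner f' (f s) = 0"
    by (rule vector_derivative_unique_at)
  then show ?thesis by (simp add: lor_inner_commute[of f'])
qed

lemma lor_inner_frame_timelike:
  assumes "lor_inner q q = 1" "lor_inner h h = 1" "lor_inner q h = 0"
  shows "lor_inner (lcross h q) (lcross h q) = -1"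
  using assms lor_inner_commute[of h q] by (simp add: lor_inner_lcross_self)

lemma det3_frame:
  assumes "lor_inner q q = 1" "lor_inner h h = 1" "lor_inner q h = 0"
  shows "det3 (x *\<^sub>R q + y *\<^sub>R h) (u *\<^sub>R q + v *\<^sub>R h) (lcross h q) = y * u - x * v"
  using assms by (simp add: det3_expand lor_inner_def lcross_nth) algebra

lemma frame_coplanar_orthogonal_imp_multiple:
  assumes "lor_inner q q = 1" "lor_inner h h = 1" "lor_inner q h = 0"
    and "det3 x q h = 0" "lor_inner h x = 0"
  shows "x = lor_inner x q *\<^sub>R q"
  using assms unfolding vec3_eq_iff det3_expand lor_inner_def by simp algebra

lemma spacelike_normalized:
  assumes "spacelike ((1 / lnorm v) *\<^sub>R v)"
  shows "lnorm v \<noteq> 0" and "lor_inner ((1 / lnorm v) *\<^sub>R v) ((1 / lnorm v) *\<^sub>R v) = 1"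
proof -
  show nz: "lnorm v \<noteq> 0"
    using assms by (auto simp: spacelike_def lor_inner_def)
  have "(lnorm v)\<^sup>2 = \<bar>lor_inner v v\<bar>"
    by (simp add: lnorm_def)
  moreover have "lor_inner v v > 0"
    using assms nz by (simp add: spacelike_def zero_less_divide_iff)
  ultimately show "lor_inner ((1 / lnorm v) *\<^sub>R v) ((1 / lnorm v) *\<^sub>R v) = 1"
    by (simp add: power2_eq_square)
qed

lemma vector_derivative_eq_central_normal:
  assumes "lnorm (vector_derivative q (at s)) \<noteq> 0"
  shows "vector_derivative q (at s) = lnorm (vector_derivative q (at s)) *\<^sub>R central_normal q s"
  using assms by (simp add: central_normal_def)

lemma asymptotic_normal_eq_lcross: "asymptotic_normal q s = lcross (central_normal q s) (q s)"
  by (simp add: asymptotic_normal_def central_normal_def)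

locale developable_ruled_surface_M1 =
  fixes c q :: "real \<Rightarrow> real^3" and s1 \<kappa> :: "real \<Rightarrow> real" and I :: "real set"
  assumes open_I: "open I"
    and c_diff: "\<forall>s\<in>I. c differentiable (at s)"
    and q_diff: "\<forall>s\<in>I. q differentiable (at s)"
    and q_unit: "\<forall>s\<in>I. lor_inner (q s) (q s) = 1"
    and h_spacelike: "\<forall>s\<in>I. spacelike (central_normal q s)"
    and striction: "\<forall>s\<in>I. lor_inner (vector_derivative q (at s)) (vector_derivative c (at s)) = 0"
    and arclength: "\<forall>s\<in>I. lnorm (vector_derivative c (at s)) = 1"
    and orient: "\<forall>s\<in>I. lor_inner (vector_derivative c (at s)) (q s) > 0"
    and developable: "developable c q I"
    and frenet_a: "\<forall>s\<in>I. (asymptotic_normal q has_vector_derivative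
                     (deriv s1 s * \<kappa> s) *\<^sub>R central_normal q s) (at s)"
begin

abbreviation "h \<equiv> central_normal q"
abbreviation "a \<equiv> asymptotic_normal q"

lemma director_derivative:
  assumes "s \<in> I"
  shows "lnorm (vector_derivative q (at s)) \<noteq> 0"
    and "vector_derivative q (at s) = lnorm (vector_derivative q (at s)) *\<^sub>R h s"
proof -
  have "spacelike ((1 / lnorm (vector_derivative q (at s))) *\<^sub>R vector_derivative q (at s))"
    using h_spacelike assms by (simp add: central_normal_def)
  then show nz: "lnorm (vector_derivative q (at s)) \<noteq> 0"
    by (rule spacelike_normalized(1))
  then show "vector_derivative q (at s) = lnorm (vector_derivative q (at s)) *\<^sub>R h s"
    by (rule vector_derivative_eq_central_normal)
qed

lemma director_frame:
  assumes "s \<in> I"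
  shows "lor_inner (q s) (q s) = 1" and "lor_inner (h s) (h s) = 1"
    and "lor_inner (q s) (h s) = 0" and "a s = lcross (h s) (q s)"
proof -
  show "lor_inner (q s) (q s) = 1"
    using q_unit assms by blast
  show "lor_inner (h s) (h s) = 1"
    unfolding central_normal_def
    by (rule spacelike_normalized(2)) (use h_spacelike assms in \<open>simp add: central_normal_def\<close>)
  have "lor_inner (q s) (vector_derivative q (at s)) = 0"
    using lor_inner_derivative_eq_0_if_constant[OF open_I assms q_unit]
      q_diff assms vector_derivative_works by blast
  then show "lor_inner (q s) (h s) = 0"
    using director_derivative[OF assms] by (metis lor_inner_scaleR(2) mult_eq_0_iff)
  show "a s = lcross (h s) (q s)"
    by (rule asymptotic_normal_eq_lcross)
qed

lemma striction_tangent: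
  assumes "s \<in> I"
  shows "vector_derivative c (at s) = q s"
proof -
  define C where "C = vector_derivative c (at s)"
  define L where "L = lnorm (vector_derivative q (at s))"
  have L: "L \<noteq> 0" "vector_derivative q (at s) = L *\<^sub>R h s"
    using director_derivative[OF assms] by (simp_all add: L_def)
  have "distribution_parameter c q s = 0"
    using developable assms by (simp add: developable_def)
  then have "det3 C (q s) (h s) = 0"
    using L director_frame(2)[OF assms]
    by (simp add: distribution_parameter_def C_def det3_scaleR_right)
  moreover have "lor_inner (vector_derivative q (at s)) C = 0"
    using striction assms by (simp add: C_def)
  then have "lor_inner (h s) C = 0"
    using L by simp
  ultimately have C: "C = lor_inner C (q s) *\<^sub>R q s"
    using frame_coplanar_orthogonal_imp_multiple director_frame[OF assms] by blast
  have "\<bar>lor_inner C (q s)\<bar> = 1"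
    using arg_cong[OF C, of lnorm] arclength assms director_frame(1)[OF assms]
    by (simp add: C_def lnorm_scaleR lnorm_def)
  moreover have "lor_inner C (q s) > 0"
    using orient assms by (simp add: C_def)
  ultimately show ?thesis
    using C by (simp add: C_def)
qed

end

locale mannheim_offset = developable_ruled_surface_M1 +
  fixes qs cs :: "real \<Rightarrow> real^3" and R :: real and \<theta> :: "real \<Rightarrow> real"
  assumes cs: "\<forall>s. cs s = c s + R *\<^sub>R asymptotic_normal q s"
    and qs_diff: "\<forall>s\<in>I. qs differentiable (at s)"
    and qs_nonnull: "\<forall>s\<in>I. lor_inner (vector_derivative qs (at s)) (vector_derivative qs (at s)) \<noteq> 0"
    and mannheim: "\<forall>s\<in>I. central_normal qs s = asymptotic_normal q s"
    and angle: "\<forall>s\<in>I. qs s = cos (\<theta> s) *\<^sub>R q s + sin (\<theta> s) *\<^sub>R central_normal q s"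
    and as_nonnull: "\<forall>s\<in>I. lor_inner (vector_derivative (asymptotic_normal qs) (at s))
                                      (vector_derivative (asymptotic_normal qs) (at s)) \<noteq> 0"
begin

lemma offset_striction_derivative:
  assumes "s \<in> I"
  shows "vector_derivative cs (at s) = q s + (R * (deriv s1 s * \<kappa> s)) *\<^sub>R h s"
proof -
  have "(c has_vector_derivative q s) (at s)"
    using striction_tangent[OF assms] c_diff assms vector_derivative_works by metis
  moreover have "(a has_vector_derivative (deriv s1 s * \<kappa> s) *\<^sub>R h s) (at s)"
    using frenet_a assms by blast
  ultimately have "((\<lambda>t. c t + R *\<^sub>R a t) has_vector_derivative
                     q s + R *\<^sub>R ((deriv s1 s * \<kappa> s) *\<^sub>R h s)) (at s)"
    by (intro has_vector_derivative_add bounded_linear.has_vector_derivative[OF bounded_linear_scaleR_right])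
  moreover have "cs = (\<lambda>t. c t + R *\<^sub>R a t)"
    using cs by blast
  ultimately show ?thesis
    by (simp add: vector_derivative_at)
qed

lemma offset_central_normal_derivative:
  assumes "s \<in> I"
  shows "vector_derivative (central_normal qs) (at s) = (deriv s1 s * \<kappa> s) *\<^sub>R h s"
proof -
  have "(a has_vector_derivative (deriv s1 s * \<kappa> s) *\<^sub>R h s) (at s)"
    using frenet_a assms by blast
  then have "(central_normal qs has_vector_derivative (deriv s1 s * \<kappa> s) *\<^sub>R h s) (at s)"
    by (rule has_vector_derivative_transform_within_open[OF _ open_I assms])
      (simp add: mannheim)
  then show ?thesis
    by (rule vector_derivative_at)
qed

lemma offset_director_derivative:
  assumes "s \<in> I"
  shows "vector_derivative qs (at s) = lnorm (vector_derivative qs (at s)) *\<^sub>R a s"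
proof -
  have "lnorm (vector_derivative qs (at s)) \<noteq> 0"
    using qs_nonnull assms by (simp add: lnorm_def)
  then show ?thesis
    using vector_derivative_eq_central_normal mannheim assms by metis
qed

lemma offset_asymptotic_normal:
  assumes "s \<in> I"
  shows "asymptotic_normal qs s = cos (\<theta> s) *\<^sub>R h s - sin (\<theta> s) *\<^sub>R q s"
proof -
  have "asymptotic_normal qs s = lcross (lcross (h s) (q s)) (qs s)"
    using asymptotic_normal_eq_lcross mannheim director_frame(4) assms by metis
  then show ?thesis
    using angle assms director_frame[OF assms] lor_inner_commute[of "h s" "q s"]
    by (simp add: lcross_lcross)
qed

lemma offset_asymptotic_normal_derivative:
  assumes "s \<in> I"
  shows "vector_derivative (asymptotic_normal qs) (at s) = (deriv s1 s * \<kappa> s * cos (\<theta> s)) *\<^sub>R a s"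
proof -
  have "((\<lambda>t. lcross (a t) (qs t)) has_vector_derivative
          lcross (a s) (vector_derivative qs (at s)) + lcross ((deriv s1 s * \<kappa> s) *\<^sub>R h s) (qs s)) (at s)"
    using has_vector_derivative_lcross frenet_a qs_diff vector_derivative_works assms by blast
  also have "lcross (a s) (vector_derivative qs (at s)) + lcross ((deriv s1 s * \<kappa> s) *\<^sub>R h s) (qs s)
               = (deriv s1 s * \<kappa> s * cos (\<theta> s)) *\<^sub>R a s"
  proof -
    obtain M where "vector_derivative qs (at s) = M *\<^sub>R a s"
      using offset_director_derivative[OF assms] by blast
    then show ?thesis
      using angle assms by (simp add: director_frame(4)[OF assms])
  qed
  finally have "(asymptotic_normal qs has_vector_derivative (deriv s1 s * \<kappa> s * cos (\<theta> s)) *\<^sub>R a s) (at s)"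
    by (rule has_vector_derivative_transform_within_open[OF _ open_I assms])
      (use asymptotic_normal_eq_lcross mannheim in metis)
  then show ?thesis
    by (rule vector_derivative_at)
qed

lemma offset_rate_nonzero:
  assumes "s \<in> I"
  shows "deriv s1 s * \<kappa> s * cos (\<theta> s) \<noteq> 0"
proof -
  have "lor_inner (a s) (a s) = -1"
    using lor_inner_frame_timelike director_frame[OF assms] by metis
  then show ?thesis
    using as_nonnull assms by (auto simp: offset_asymptotic_normal_derivative)
qed

lemma distribution_parameter_offset_central_normal:
  assumes "s \<in> I"
  shows "distribution_parameter cs (central_normal qs) s = 1 / (deriv s1 s * \<kappa> s)"
proof -
  have "det3 (q s + (R * (deriv s1 s * \<kappa> s)) *\<^sub>R h s) (a s) (h s) = 1"
    using det3_frame[OF director_frame(1-3)[OF assms], of 1 "R * (deriv s1 s * \<kappa> s)" 0 1]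
      det3_swap23[of "q s + (R * (deriv s1 s * \<kappa> s)) *\<^sub>R h s" "a s" "h s"] director_frame(4)[OF assms]
    by simp
  then show ?thesis
    using director_frame(2)[OF assms] mannheim assms
    by (simp add: distribution_parameter_def offset_striction_derivative
        offset_central_normal_derivative det3_scaleR_right)
qed

lemma distribution_parameter_offset_asymptotic_normal:
  assumes "s \<in> I"
  shows "distribution_parameter cs (asymptotic_normal qs) s =
           (cos (\<theta> s) + R * deriv s1 s * \<kappa> s * sin (\<theta> s)) / (deriv s1 s * \<kappa> s * cos (\<theta> s))"
proof -
  have "det3 (q s + (R * (deriv s1 s * \<kappa> s)) *\<^sub>R h s) (cos (\<theta> s) *\<^sub>R h s - sin (\<theta> s) *\<^sub>R q s) (a s)
          = - (cos (\<theta> s) + R * deriv s1 s * \<kappa> s * sin (\<theta> s))"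
    using det3_frame[OF director_frame(1-3)[OF assms], of 1 "R * (deriv s1 s * \<kappa> s)" "- sin (\<theta> s)" "cos (\<theta> s)"]
      director_frame(4)[OF assms] by (simp add: algebra_simps)
  moreover have "lor_inner (a s) (a s) = -1"
    using lor_inner_frame_timelike director_frame[OF assms] by metis
  ultimately show ?thesis
    using offset_rate_nonzero[OF assms]
    by (simp add: distribution_parameter_def offset_striction_derivative offset_asymptotic_normal
        offset_asymptotic_normal_derivative det3_scaleR_right assms minus_divide_left)
qed

end

theorem corollary6p4:
  fixes c q qs cs :: "real \<Rightarrow> real^3"
    and s1 \<kappa> \<theta> :: "real \<Rightarrow> real"
    and R :: real
    and I :: "real set"
  assumes I: "open I" "I \<noteq> {}"
    \<comment> \<open>the ruled surface phi = c + v q, of type M^1_+\<close>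
    and c_diff: "\<forall>s\<in>I. c differentiable (at s)"
    and q_diff: "\<forall>s\<in>I. q differentiable (at s)"
    and q_unit: "\<forall>s\<in>I. lor_inner (q s) (q s) = 1"
    and h_spacelike: "\<forall>s\<in>I. spacelike (central_normal q s)"
    and striction: "\<forall>s\<in>I. lor_inner (vector_derivative q (at s)) (vector_derivative c (at s)) = 0"
    and arclength: "\<forall>s\<in>I. lnorm (vector_derivative c (at s)) = 1"
    and orient: "\<forall>s\<in>I. lor_inner (vector_derivative c (at s)) (q s) > 0"
    and dev: "developable c q I"
    \<comment> \<open>arc length s1 of the spherical image of q, conical curvature kappa, Frenet formulas\<close>
    and s1: "\<forall>s\<in>I. (s1 has_real_derivative lnorm (vector_derivative q (at s))) (at s)"
    and frenet_h: "\<forall>s\<in>I. (central_normal q has_vector_derivative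
                     deriv s1 s *\<^sub>R (\<kappa> s *\<^sub>R asymptotic_normal q s - q s)) (at s)"
    and frenet_a: "\<forall>s\<in>I. (asymptotic_normal q has_vector_derivative
                     (deriv s1 s * \<kappa> s) *\<^sub>R central_normal q s) (at s)"
    \<comment> \<open>the Mannheim offset phi* = c + R a + v q*, of type M^2_+\<close>
    and cs: "\<forall>s. cs s = c s + R *\<^sub>R asymptotic_normal q s"
    and qs_diff: "\<forall>s\<in>I. qs differentiable (at s)"
    and qs_unit: "\<forall>s\<in>I. lor_inner (qs s) (qs s) = 1"
    and qs_nonnull: "\<forall>s\<in>I. lor_inner (vector_derivative qs (at s)) (vector_derivative qs (at s)) \<noteq> 0"
    and hs_timelike: "\<forall>s\<in>I. timelike (central_normal qs s)"
    and mannheim: "\<forall>s\<in>I. central_normal qs s = asymptotic_normal q s"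
    and angle: "\<forall>s\<in>I. qs s = cos (\<theta> s) *\<^sub>R q s + sin (\<theta> s) *\<^sub>R central_normal q s"
    \<comment> \<open>phi_{a*} is a ruled surface: its director derivative is non-null\<close>
    and as_nonnull: "\<forall>s\<in>I. lor_inner (vector_derivative (asymptotic_normal qs) (at s))
                                      (vector_derivative (asymptotic_normal qs) (at s)) \<noteq> 0"
  shows "\<not> developable cs (central_normal qs) I \<and>
         (developable cs (asymptotic_normal qs) I \<longleftrightarrow>
            (\<forall>s\<in>I. cos (\<theta> s) + R * deriv s1 s * \<kappa> s * sin (\<theta> s) = 0))"
proof -
  interpret mannheim_offset c q s1 \<kappa> I qs cs R \<theta>
    using assms by unfold_locales blast+
  obtain s0 where s0: "s0 \<in> I"
    using I(2) by blast
  have "distribution_parameter cs (central_normal qs) s0 \<noteq> 0"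
    using offset_rate_nonzero[OF s0] by (simp add: distribution_parameter_offset_central_normal[OF s0])
  then have "\<not> developable cs (central_normal qs) I"
    using s0 unfolding developable_def by blast
  moreover have "developable cs (asymptotic_normal qs) I \<longleftrightarrow>
                   (\<forall>s\<in>I. cos (\<theta> s) + R * deriv s1 s * \<kappa> s * sin (\<theta> s) = 0)"
    unfolding developable_def
  proof (rule ball_cong[OF refl])
    fix s
    assume "s \<in> I"
    then show "distribution_parameter cs (asymptotic_normal qs) s = 0 \<longleftrightarrow>
                 cos (\<theta> s) + R * deriv s1 s * \<kappa> s * sin (\<theta> s) = 0"
      using offset_rate_nonzero by (simp add: distribution_parameter_offset_asymptotic_normal)
  qed
  ultimately show ?thesis
    by blast
qed

end
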